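(* Let $\Gamma$ be an Arf numerical semigroup with conductor $c$ and multiplicity $e\ge3$. Then $c+e-2$ or $c+e-3$ is an irreducible element of $\Gamma$.
   Context: A numerical semigroup is a subset $\Gamma\subseteq\mathbb N$ containing $0$, closed under addition, with finite complement; write $\Gamma=\{0=\rho_1<\rho_2<\cdots\}$; multiplicity $e=\rho_2$; conductor $c$ = least integer with $c+\mathbb N\subseteq\Gamma$. $\Gamma$ is Arf if $\rho_i+\rho_j-\rho_k\in\Gamma$ for all $i\ge j\ge k$. A nonzero $s\in\Gamma$ is irreducible if it cannot be written as a sum of two nonzero elements of $\Gamma$ (equivalently, its only divisors $t\in\Gamma$ with $s-t\in\Gamma$ are $0$ and $s$). *)

theory Defs
  imports Main
begin

definition numerical_semigroup :: "nat set \<Rightarrow> bool" where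
  "numerical_semigroup S \<longleftrightarrow> 0 \<in> S \<and> (\<forall>x\<in>S. \<forall>y\<in>S. x + y \<in> S) \<and> finite (UNIV - S)"

definition multiplicity_ns :: "nat set \<Rightarrow> nat" where
  "multiplicity_ns S = (LEAST x. x \<in> S \<and> x \<noteq> 0)"

definition conductor :: "nat set \<Rightarrow> nat" where
  "conductor S = (LEAST c. \<forall>n\<ge>c. n \<in> S)"

definition arf :: "nat set \<Rightarrow> bool" where
  "arf S \<longleftrightarrow> (\<forall>x\<in>S. \<forall>y\<in>S. \<forall>z\<in>S. x \<ge> y \<and> y \<ge> z \<longrightarrow> x + y - z \<in> S)"

definition irreducible_ns :: "nat set \<Rightarrow> nat \<Rightarrow> bool" where
  "irreducible_ns S s \<longleftrightarrow> s \<in> S \<and> s \<noteq> 0 \<and>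
     \<not> (\<exists>a\<in>S. \<exists>b\<in>S. a \<noteq> 0 \<and> b \<noteq> 0 \<and> s = a + b)"

end

theory Submission
  imports Defs
begin

text \<open>In an Arf semigroup with multiplicity \<open>e\<close>, a reducible element \<open>s = a + b\<close> with
  \<open>a \<ge> b \<ge> e\<close> satisfies \<open>s - e = a + b - e \<in> \<Gamma>\<close>. So if neither \<open>c + e - 2\<close> nor \<open>c + e - 3\<close>
  is irreducible, both \<open>c - 2\<close> and \<open>c - 3\<close> lie in \<open>\<Gamma>\<close>, and the Arf property applied to
  \<open>(c - 2) + (c - 2) - (c - 3)\<close> puts the gap \<open>c - 1\<close> into \<open>\<Gamma>\<close>.\<close>

lemma numerical_semigroup_eventually_in:
  assumes "numerical_semigroup S"
  obtains m where "\<And>n. n \<ge> m \<Longrightarrow> n \<in> S"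
proof -
  have "finite (UNIV - S)" using assms unfolding numerical_semigroup_def by blast
  then obtain m where "\<forall>n\<in>UNIV - S. n < m" using finite_nat_set_iff_bounded by blast
  then have "n \<in> S" if "n \<ge> m" for n using that by (meson Diff_iff UNIV_I not_le)
  then show ?thesis by (rule that)
qed

lemma conductor_le_imp_in:
  assumes "numerical_semigroup S" and "conductor S \<le> n"
  shows "n \<in> S"
proof -
  obtain m where m: "\<And>n. n \<ge> m \<Longrightarrow> n \<in> S"
    using numerical_semigroup_eventually_in[OF assms(1)] by blast
  have "\<forall>n\<ge>conductor S. n \<in> S"
    unfolding conductor_def by (rule LeastI[of _ m]) (use m in blast)
  then show ?thesis using assms(2) by blast
qed

lemma conductor_minus_one_notin:
  assumes "numerical_semigroup S" and "conductor S > 0"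
  shows "conductor S - 1 \<notin> S"
proof
  assume "conductor S - 1 \<in> S"
  moreover have "n \<in> S" if "n \<ge> conductor S" for n
    using conductor_le_imp_in[OF assms(1) that] .
  ultimately have "\<forall>n\<ge>conductor S - 1. n \<in> S"
    by (metis Suc_diff_1 assms(2) le_eq_less_or_eq Suc_le_eq)
  then have "conductor S \<le> conductor S - 1"
    unfolding conductor_def by (rule Least_le)
  then show False using assms(2) by simp
qed

lemma multiplicity_in:
  assumes "numerical_semigroup S"
  shows "multiplicity_ns S \<in> S" and "multiplicity_ns S \<noteq> 0"
proof -
  obtain m where "\<And>n. n \<ge> m \<Longrightarrow> n \<in> S"
    using numerical_semigroup_eventually_in[OF assms] by blast
  then have "m + 1 \<in> S \<and> m + 1 \<noteq> 0" by simp
  then have "multiplicity_ns S \<in> S \<and> multiplicity_ns S \<noteq> 0"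
    unfolding multiplicity_ns_def by (rule LeastI)
  then show "multiplicity_ns S \<in> S" and "multiplicity_ns S \<noteq> 0" by blast+
qed

lemma multiplicity_le:
  assumes "x \<in> S" and "x \<noteq> 0"
  shows "multiplicity_ns S \<le> x"
  unfolding multiplicity_ns_def by (rule Least_le) (use assms in blast)

lemma conductor_pos:
  assumes "numerical_semigroup S" and "multiplicity_ns S \<ge> 2"
  shows "conductor S > 0"
proof (rule ccontr)
  assume "\<not> conductor S > 0"
  then have "1 \<in> S" using conductor_le_imp_in[OF assms(1)] by simp
  then show False using multiplicity_le[of 1 S] assms(2) by simp
qed

lemma arf_add_twice_diff:
  assumes "arf S" and "x \<in> S" and "x + d \<in> S"
  shows "x + 2 * d \<in> S"
proof -
  have "(x + d) + (x + d) - x \<in> S"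
    using assms le_add1[of x d] order_refl[of "x + d"] unfolding arf_def by blast
  moreover have "(x + d) + (x + d) - x = x + 2 * d" by simp
  ultimately show ?thesis by simp
qed

lemma arf_reducible_minus_multiplicity:
  assumes "numerical_semigroup S" and "arf S"
    and "s \<in> S" and "s \<noteq> 0" and "\<not> irreducible_ns S s"
  shows "s - multiplicity_ns S \<in> S" and "2 * multiplicity_ns S \<le> s"
proof -
  let ?e = "multiplicity_ns S"
  obtain a' b' where "a' \<in> S" "b' \<in> S" "a' \<noteq> 0" "b' \<noteq> 0" "s = a' + b'"
    using assms(3-5) unfolding irreducible_ns_def by blast
  define a b where "a = max a' b'" and "b = min a' b'"
  have ab: "a \<in> S" "b \<in> S" "a \<noteq> 0" "b \<noteq> 0" "s = a + b" "b \<le> a"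
    unfolding a_def b_def using \<open>a' \<in> S\<close> \<open>b' \<in> S\<close> \<open>a' \<noteq> 0\<close> \<open>b' \<noteq> 0\<close> \<open>s = a' + b'\<close>
    by (auto simp: max_def min_def)
  have "?e \<le> b" using multiplicity_le ab by blast
  moreover have "a + b - ?e \<in> S"
    using assms(2) ab \<open>?e \<le> b\<close> multiplicity_in[OF assms(1)] unfolding arf_def by blast
  ultimately show "s - ?e \<in> S" and "2 * ?e \<le> s" using ab by simp_all
qed

theorem proposition4p7:
  fixes S :: "nat set"
  assumes "numerical_semigroup S"
    and "arf S"
    and "multiplicity_ns S \<ge> 3"
  shows "irreducible_ns S (conductor S + multiplicity_ns S - 2)
       \<or> irreducible_ns S (conductor S + multiplicity_ns S - 3)"
proof (rule ccontr)
  define c e where "c = conductor S" and "e = multiplicity_ns S"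
  assume "\<not> ?thesis"
  then have reducible: "\<not> irreducible_ns S (c + e - k)" if "k \<in> {2, 3}" for k
    using that c_def e_def by auto
  have "c > 0" using conductor_pos assms(1,3) c_def by simp
  have in_S: "c + e - k \<in> S" and nonzero: "c + e - k \<noteq> 0" if "k \<in> {2, 3}" for k
    using that conductor_le_imp_in[OF assms(1)] assms(3) \<open>c > 0\<close> c_def e_def by auto
  note reduced = arf_reducible_minus_multiplicity[OF assms(1,2) in_S nonzero reducible, folded e_def]
  have "c + e - 3 - e \<in> S" and "2 * e \<le> c + e - 3" using reduced[of 3] by auto
  then have "c - 3 \<in> S" and "c \<ge> 3" using assms(3) e_def by auto
  have "c + e - 2 - e = c - 3 + 1" using \<open>c \<ge> 3\<close> by simp
  then have "c - 3 + 1 \<in> S" using reduced[of 2] by auto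
  with \<open>c - 3 \<in> S\<close> have "c - 3 + 2 * 1 \<in> S" by (rule arf_add_twice_diff[OF assms(2)])
  moreover have "c - 3 + 2 * 1 = c - 1" using \<open>c \<ge> 3\<close> by simp
  ultimately have "c - 1 \<in> S" by simp
  then show False using conductor_minus_one_notin[OF assms(1)] \<open>c > 0\<close> c_def by simp
qed

end
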